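(* Let $\Sigma$ be a complete fan in $N_{\mathbb R}\cong\mathbb R^2$ and $\mathbb L$ a combinatorially indecomposable tropical Lagrangian multi-section of rank $r$ over $\Sigma$. If $\mathbb L$ is unobstructed, with local system $\mathcal L$ on $L\setminus S'$ and consistent collection $\Theta$, then $\mathcal L$ is (up to isomorphism) the unique $\mathbb C^\times$-local system on $L\setminus S'$ whose monodromy around the unique ramification point of $\pi:L\to N_{\mathbb R}$ is $(-1)^{r+1}$.
   Context: $N$ lattice of rank $2$, $M=\mathrm{Hom}(N,\mathbb Z)$, $\Sigma(k)$ the $k$-dimensional cones, $\sigma^\vee$ dual cones, $U(\sigma)=\mathrm{Spec}\,\mathbb C[\sigma^\vee\cap M]$, $z^m$ monomials. $\mathbb L=(L,\Sigma_L,\mu,\pi,\varphi)$: a cone complex $L$ (finite union of closed rational polyhedral cones glued along faces), weights $\mu$, a branched covering $\pi$ onto $(N_{\mathbb R},\Sigma)$ mapping cones homeomorphically onto cones with weighted fibre count $r$, and $\varphi$ continuous, integral linear on cones; $m(\sigma')\in M$ its slope on a maximal cone; $\sigma^{(1)},\dots,\sigma^{(r)}$ the lifts of $\sigma\in\Sigma(2)$ with multiplicity. Combinatorial indecomposability (not combinatorially equivalent to a combinatorial union of two connected ones) gives: $L$ connected, separable (distinct lifts of a ray carry distinct restrictions of $\varphi$), and ramification locus $S'=L^{(0)}=\pi^{-1}(0)$ a single point. For adjacent $\sigma_1,\sigma_2\in\Sigma(2)$ (sharing a ray), each lift $\sigma_1^{(\alpha)}$ determines a unique lift $\sigma_2^{(\beta)}$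 sharing a ray with it. A $\mathbb C^\times$-local system $\mathcal L$ on $L\setminus S'$ is represented by constants $g^{sf}_{\sigma_1^{(\alpha)}\sigma_2^{(\beta)}}\in\mathbb C^\times$ on adjacent pairs of lifts. $\mathcal E_\sigma$: trivial rank $r$ bundle on $U(\sigma)$ with frame $1(\sigma^{(\alpha)})$ of torus weight $m(\sigma^{(\alpha)})$. $G^{sf}_{\sigma_1\sigma_2}:1(\sigma_1^{(\alpha)})\mapsto g^{sf}_{\sigma_1^{(\alpha)}\sigma_2^{(\beta)}}z^{m(\sigma_1^{(\alpha)})-m(\sigma_2^{(\beta)})}1(\sigma_2^{(\beta)})$. For $\tau=\sigma_1\cap\sigma_2\in\Sigma(1)$ and a cone $\omega'$ of $L$, $N_\tau(\omega')$ is the endomorphism of $\mathcal E_{\sigma_1}|_{U(\tau)}$ with $(\alpha,\beta)$-entry $n^{(\alpha\beta)}_\tau(\omega')z^{m(\sigma_1^{(\alpha)})-m(\sigma_1^{(\beta)})}$ ($n$'s complex constants) if $\omega'\subset\sigma_1^{(\alpha)}\cap\sigma_1^{(\beta)}$, $\alpha\ne\beta$, $m(\sigma_1^{(\alpha)})-m(\sigma_1^{(\beta)})\in\tau^\vee\cap M$, and $0$ otherwise; $\Theta_{\sigma_1\sigma_2}=\prod_{\omega'\in S'_\tau}\exp N_\tau(\omega')$ with $S'_\tau=\{\sigma_1^{(\alpha)}\cap\sigma_1^{(\beta)}:m(\sigma_1^{(\alpha)})-m(\sigma_1^{(\beta)})\in\tau^\vee\cap M\}$; $G_{\sigma_1\sigma_2}=G^{sf}_{\sigma_1\sigma_2}\circ\Theta_{\sigma_1\sigma_2}$.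 $\Theta$ is consistent if for every $\omega\in\Sigma$ and every cycle $\sigma_1,\dots,\sigma_{l+1}=\sigma_1$ of maximal cones containing $\omega$ with consecutive ones sharing a ray, $G_{\sigma_l\sigma_{l+1}}|_{U(\omega)}\circ\cdots\circ G_{\sigma_1\sigma_2}|_{U(\omega)}=\mathrm{Id}$. $\mathbb L$ is unobstructed if there exist $\mathcal L$ and a consistent $\Theta$. *)

theory Defs
  imports Complex_Main
begin

section \<open>Lattice data: N = M = Z^2\<close>

definition pair_ip :: "int \<times> int \<Rightarrow> int \<times> int \<Rightarrow> int" where
  "pair_ip u w = fst u * fst w + snd u * snd w"

definition mdiff :: "int \<times> int \<Rightarrow> int \<times> int \<Rightarrow> int \<times> int" where
  "mdiff u w = (fst u - fst w, snd u - snd w)"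

definition det2 :: "int \<times> int \<Rightarrow> int \<times> int \<Rightarrow> int" where
  "det2 u w = fst u * snd w - snd u * fst w"

text \<open>Rays v 0, ..., v (k-1) in counterclockwise order; maximal cone i is spanned by
  v i and v ((i+1) mod k); ray i is the common ray of maximal cones (i-1) mod k and i.\<close>

definition cone2 :: "int \<times> int \<Rightarrow> int \<times> int \<Rightarrow> (real \<times> real) set" where
  "cone2 u w = {(a * of_int (fst u) + b * of_int (fst w), a * of_int (snd u) + b * of_int (snd w))
                 | a b. a \<ge> 0 \<and> b \<ge> 0}"

definition cone2_interior :: "int \<times> int \<Rightarrow> int \<times> int \<Rightarrow> (real \<times> real) set" where
  "cone2_interior u w = {(a * of_int (fst u) + b * of_int (fst w), a * of_int (snd u) + b * of_int (snd w))
                 | a b. a > 0 \<and> b > 0}"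

definition complete_fan2 :: "nat \<Rightarrow> (nat \<Rightarrow> int \<times> int) \<Rightarrow> bool" where
  "complete_fan2 k v \<longleftrightarrow> k \<ge> 3
     \<and> (\<forall>i<k. det2 (v i) (v (Suc i mod k)) > 0)
     \<and> (\<Union>i<k. cone2 (v i) (v (Suc i mod k))) = UNIV
     \<and> (\<forall>i<k. \<forall>j<k. i \<noteq> j \<longrightarrow>
           cone2_interior (v i) (v (Suc i mod k)) \<inter> cone2_interior (v j) (v (Suc j mod k)) = {})"

text \<open>Lift alpha < r of maximal cone i; p i alpha is the unique lift of maximal cone (i+1) mod k
  sharing a ray (a lift of ray (i+1) mod k) with it; m i alpha is the slope of phi on that lift.\<close>

definition trop_multisection ::
  "nat \<Rightarrow> (nat \<Rightarrow> int \<times> int) \<Rightarrow> nat \<Rightarrow> (nat \<Rightarrow> nat \<Rightarrow> nat) \<Rightarrow> (nat \<Rightarrow> nat \<Rightarrow> int \<times> int) \<Rightarrow> bool" where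
  "trop_multisection k v r p m \<longleftrightarrow> r \<ge> 1
     \<and> (\<forall>i<k. bij_betw (p i) {..<r} {..<r})
     \<and> (\<forall>i<k. \<forall>\<alpha><r. pair_ip (m i \<alpha>) (v (Suc i mod k))
                        = pair_ip (m (Suc i mod k) (p i \<alpha>)) (v (Suc i mod k)))"

text \<open>Separability: distinct lifts of a ray carry distinct restrictions of phi.\<close>
definition separable ::
  "nat \<Rightarrow> (nat \<Rightarrow> int \<times> int) \<Rightarrow> nat \<Rightarrow> (nat \<Rightarrow> nat \<Rightarrow> int \<times> int) \<Rightarrow> bool" where
  "separable k v r m \<longleftrightarrow>
     (\<forall>i<k. \<forall>\<alpha><r. \<forall>\<beta><r. \<alpha> \<noteq> \<beta> \<longrightarrow>
         pair_ip (m i \<alpha>) (v i) \<noteq> pair_ip (m i \<beta>) (v i)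
       \<and> pair_ip (m i \<alpha>) (v (Suc i mod k)) \<noteq> pair_ip (m i \<beta>) (v (Suc i mod k)))"

definition lstep :: "nat \<Rightarrow> (nat \<Rightarrow> nat \<Rightarrow> nat) \<Rightarrow> nat \<times> nat \<Rightarrow> nat \<times> nat" where
  "lstep k p x = (Suc (fst x) mod k, p (fst x) (snd x))"

definition link_edges :: "nat \<Rightarrow> nat \<Rightarrow> (nat \<Rightarrow> nat \<Rightarrow> nat) \<Rightarrow> ((nat \<times> nat) \<times> (nat \<times> nat)) set" where
  "link_edges k r p = {(x, lstep k p x) | x. fst x < k \<and> snd x < r}"

text \<open>L minus S' is connected (its adjacency graph of maximal lifts is connected).\<close>
definition link_connected :: "nat \<Rightarrow> nat \<Rightarrow> (nat \<Rightarrow> nat \<Rightarrow> nat) \<Rightarrow> bool" where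
  "link_connected k r p \<longleftrightarrow>
     (\<forall>i<k. \<forall>\<alpha><r. \<forall>j<k. \<forall>\<beta><r.
        ((i, \<alpha>), (j, \<beta>)) \<in> (link_edges k r p \<union> (link_edges k r p)\<inverse>)\<^sup>*)"

text \<open>g i alpha is the constant of the local system on the adjacent pair
  (lift alpha of cone i, lift p i alpha of cone (i+1) mod k); the reverse pair carries the inverse.\<close>
definition loc_sys :: "nat \<Rightarrow> nat \<Rightarrow> (nat \<Rightarrow> nat \<Rightarrow> complex) \<Rightarrow> bool" where
  "loc_sys k r g \<longleftrightarrow> (\<forall>i<k. \<forall>\<alpha><r. g i \<alpha> \<noteq> 0)"

definition ls_iso :: "nat \<Rightarrow> nat \<Rightarrow> (nat \<Rightarrow> nat \<Rightarrow> nat) \<Rightarrow> (nat \<Rightarrow> nat \<Rightarrow> complex)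
                       \<Rightarrow> (nat \<Rightarrow> nat \<Rightarrow> complex) \<Rightarrow> bool" where
  "ls_iso k r p g g' \<longleftrightarrow> (\<exists>h :: nat \<Rightarrow> nat \<Rightarrow> complex.
      (\<forall>i<k. \<forall>\<alpha><r. h i \<alpha> \<noteq> 0)
    \<and> (\<forall>i<k. \<forall>\<alpha><r. g' i \<alpha> * h i \<alpha> = h (Suc i mod k) (p i \<alpha>) * g i \<alpha>))"

text \<open>Holonomy along the lift (starting at lift x) of the counterclockwise walk around the origin.\<close>
fun holonomy :: "nat \<Rightarrow> (nat \<Rightarrow> nat \<Rightarrow> nat) \<Rightarrow> (nat \<Rightarrow> nat \<Rightarrow> complex) \<Rightarrow> nat \<Rightarrow> nat \<times> nat \<Rightarrow> complex" where
  "holonomy k p g 0 x = 1"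
| "holonomy k p g (Suc l) x = g (fst x) (snd x) * holonomy k p g l (lstep k p x)"

text \<open>Monodromy around the ramification point S': a small loop around S' in L maps to a loop
  going r times around the origin, i.e. k*r steps through maximal lifts.\<close>
definition monodromy :: "nat \<Rightarrow> nat \<Rightarrow> (nat \<Rightarrow> nat \<Rightarrow> nat) \<Rightarrow> (nat \<Rightarrow> nat \<Rightarrow> complex) \<Rightarrow> complex" where
  "monodromy k r p g = holonomy k p g (k * r) (0, 0)"

section \<open>r x r matrices (acting on row vectors: entry (a,b) = coefficient of 1(b) in image of 1(a))\<close>

type_synonym cmat = "nat \<Rightarrow> nat \<Rightarrow> complex"

definition mid :: cmat where "mid a b = (if a = b then 1 else 0)"

definition mmul :: "nat \<Rightarrow> cmat \<Rightarrow> cmat \<Rightarrow> cmat" where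
  "mmul r A B a b = (\<Sum>c<r. A a c * B c b)"

fun mpow :: "nat \<Rightarrow> cmat \<Rightarrow> nat \<Rightarrow> cmat" where
  "mpow r A 0 = mid"
| "mpow r A (Suc j) = mmul r (mpow r A j) A"

definition mexp :: "nat \<Rightarrow> cmat \<Rightarrow> cmat" where
  "mexp r A a b = (\<Sum>j. mpow r A j a b / of_nat (fact j))"

definition zmon :: "complex \<times> complex \<Rightarrow> int \<times> int \<Rightarrow> complex" where
  "zmon z e = fst z powi fst e * snd z powi snd e"

definition adjacent :: "nat \<Rightarrow> nat \<Rightarrow> nat \<Rightarrow> bool" where
  "adjacent k a b \<longleftrightarrow> a < k \<and> b < k \<and> (b = Suc a mod k \<or> a = Suc b mod k)"

definition gsf :: "nat \<Rightarrow> (nat \<Rightarrow> nat \<Rightarrow> nat) \<Rightarrow> (nat \<Rightarrow> nat \<Rightarrow> complex)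
                    \<Rightarrow> nat \<Rightarrow> nat \<Rightarrow> nat \<Rightarrow> nat \<Rightarrow> complex" where
  "gsf k p g a \<alpha> b \<beta> =
     (if b = Suc a mod k then (if \<beta> = p a \<alpha> then g a \<alpha> else 0)
      else if a = Suc b mod k then (if p b \<beta> = \<alpha> then inverse (g b \<beta>) else 0)
      else 0)"

definition Gsf_mat :: "nat \<Rightarrow> (nat \<Rightarrow> nat \<Rightarrow> nat) \<Rightarrow> (nat \<Rightarrow> nat \<Rightarrow> int \<times> int) \<Rightarrow> (nat \<Rightarrow> nat \<Rightarrow> complex)
                        \<Rightarrow> complex \<times> complex \<Rightarrow> nat \<Rightarrow> nat \<Rightarrow> cmat" where
  "Gsf_mat k p m g z a b \<alpha> \<beta> = gsf k p g a \<alpha> b \<beta> * zmon z (mdiff (m a \<alpha>) (m b \<beta>))"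

text \<open>The ray tau = sigma_a \<inter> sigma_b of adjacent maximal cones a, b.\<close>
definition tau :: "nat \<Rightarrow> nat \<Rightarrow> nat \<Rightarrow> nat" where
  "tau k a b = (if b = Suc a mod k then b else a)"

text \<open>N_tau for the pair (sigma_a, sigma_b); by separability the only cone of L contained in
  two distinct lifts of sigma_a is the apex S', so Theta_{ab} = exp N_tau(S').
  n a b alpha beta are the complex constants n_tau^{(alpha beta)}(S').\<close>
definition N_mat :: "nat \<Rightarrow> (nat \<Rightarrow> int \<times> int) \<Rightarrow> (nat \<Rightarrow> nat \<Rightarrow> int \<times> int)
                      \<Rightarrow> (nat \<Rightarrow> nat \<Rightarrow> nat \<Rightarrow> nat \<Rightarrow> complex) \<Rightarrow> complex \<times> complex \<Rightarrow> nat \<Rightarrow> nat \<Rightarrow> cmat" where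
  "N_mat k v m n z a b \<alpha> \<beta> =
     (if \<alpha> \<noteq> \<beta> \<and> pair_ip (mdiff (m a \<alpha>) (m a \<beta>)) (v (tau k a b)) \<ge> 0
      then n a b \<alpha> \<beta> * zmon z (mdiff (m a \<alpha>) (m a \<beta>)) else 0)"

text \<open>G_{ab} = G^sf_{ab} o Theta_{ab} (Theta applied first; row-vector convention).\<close>
definition G_mat :: "nat \<Rightarrow> (nat \<Rightarrow> int \<times> int) \<Rightarrow> nat \<Rightarrow> (nat \<Rightarrow> nat \<Rightarrow> nat) \<Rightarrow> (nat \<Rightarrow> nat \<Rightarrow> int \<times> int)
                      \<Rightarrow> (nat \<Rightarrow> nat \<Rightarrow> complex) \<Rightarrow> (nat \<Rightarrow> nat \<Rightarrow> nat \<Rightarrow> nat \<Rightarrow> complex)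
                      \<Rightarrow> complex \<times> complex \<Rightarrow> nat \<Rightarrow> nat \<Rightarrow> cmat" where
  "G_mat k v r p m g n z a b = mmul r (mexp r (N_mat k v m n z a b)) (Gsf_mat k p m g z a b)"

text \<open>Composite G_{c_{l-1} c_l} o ... o G_{c_0 c_1} along a walk.\<close>
fun walk_prod :: "nat \<Rightarrow> (nat \<Rightarrow> nat \<Rightarrow> cmat) \<Rightarrow> nat list \<Rightarrow> cmat" where
  "walk_prod r G (a # b # cs) = mmul r (G a b) (walk_prod r G (b # cs))"
| "walk_prod r G _ = mid"

datatype fan_cone = ZeroC | RayC nat | MaxC nat

definition fan_cones :: "nat \<Rightarrow> fan_cone set" where
  "fan_cones k = {ZeroC} \<union> RayC ` {..<k} \<union> MaxC ` {..<k}"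

fun face_of_max :: "nat \<Rightarrow> fan_cone \<Rightarrow> nat \<Rightarrow> bool" where
  "face_of_max k ZeroC i = True"
| "face_of_max k (RayC j) i = (j = i \<or> j = Suc i mod k)"
| "face_of_max k (MaxC j) i = (j = i)"

definition cycle_around :: "nat \<Rightarrow> fan_cone \<Rightarrow> nat list \<Rightarrow> bool" where
  "cycle_around k \<omega> cs \<longleftrightarrow> length cs \<ge> 2 \<and> hd cs = last cs
     \<and> (\<forall>c\<in>set cs. c < k \<and> face_of_max k \<omega> c)
     \<and> (\<forall>j. Suc j < length cs \<longrightarrow> adjacent k (cs ! j) (cs ! Suc j))"

text \<open>Consistency: the composite around each cycle is the identity on U(omega); since all
  maps are given by Laurent monomial matrices, this is tested on the dense torus.\<close>
definition Theta_consistent :: "nat \<Rightarrow> (nat \<Rightarrow> int \<times> int) \<Rightarrow> nat \<Rightarrow> (nat \<Rightarrow> nat \<Rightarrow> nat)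
     \<Rightarrow> (nat \<Rightarrow> nat \<Rightarrow> int \<times> int) \<Rightarrow> (nat \<Rightarrow> nat \<Rightarrow> complex) \<Rightarrow> (nat \<Rightarrow> nat \<Rightarrow> nat \<Rightarrow> nat \<Rightarrow> complex) \<Rightarrow> bool" where
  "Theta_consistent k v r p m g n \<longleftrightarrow>
     (\<forall>\<omega>\<in>fan_cones k. \<forall>cs. cycle_around k \<omega> cs \<longrightarrow>
        (\<forall>z. fst z \<noteq> 0 \<and> snd z \<noteq> 0 \<longrightarrow>
           (\<forall>\<alpha><r. \<forall>\<beta><r. walk_prod r (G_mat k v r p m g n z) cs \<alpha> \<beta> = mid \<alpha> \<beta>)))"

end

(* Go once around the origin through the maximal cones at the torus point z = (1,1).
   Consistency makes the product of the transition matrices the identity, so the product of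
   their determinants is 1.  Each factor is exp N * G^sf: separability makes N strictly
   triangular for the order of the sheets by the value of phi on the shared ray, so
   det (exp N) = 1, while G^sf is a monomial matrix with determinant sign(p_i) prod_alpha g_i^alpha.
   The product of the sheet permutations p_i is the monodromy permutation of the sheets, an
   r-cycle because L minus S' is connected; hence 1 = (-1)^(r-1) times the monodromy.
   For uniqueness, connectedness makes the adjacency graph of the maximal lifts a single cycle
   of length k r, and along a cycle a local system is determined up to isomorphism by its
   holonomy. *)
theory Submission
  imports Defs "HOL-Combinatorics.Cycles" "HOL-Combinatorics.Orbits" "Jordan_Normal_Form.Determinant"
begin

section \<open>Orbits of injective self-maps of finite sets\<close>

lemma self_in_orbit_if_inj_on:
  assumes fin: "finite D" and maps: "T ` D \<subseteq> D" and inj: "inj_on T D" and x: "x \<in> D"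
  shows "x \<in> orbit T x"
proof -
  define T' where "T' y = (if y \<in> D then T y else y)" for y
  have "bij_betw T D D"
    using endo_inj_surj[OF fin maps inj] inj by (simp add: bij_betw_def)
  then have "bij_betw T' D D"
    by (rule bij_betw_cong[THEN iffD1, rotated]) (simp add: T'_def)
  then have "T' permutes D"
    by (rule bij_imp_permutes) (simp add: T'_def)
  then have "x \<in> orbit T' x"
    using fin by (intro permutation_self_in_orbit) (auto simp: permutation_permutes)
  moreover have "orbit T x = orbit T' x"
    using x maps by (intro orbit_cong0[where A = D]) (auto simp: T'_def)
  ultimately show ?thesis by simp
qed

lemma orbit_subset_if_maps:
  assumes "T ` D \<subseteq> D" and "x \<in> D"
  shows "orbit T x \<subseteq> D"
proof
  fix y assume "y \<in> orbit T x"
  then show "y \<in> D" by induction (use assms in auto)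
qed

lemma orbit_eq_if_connected:
  assumes fin: "finite D" and maps: "T ` D \<subseteq> D" and inj: "inj_on T D" and x: "x \<in> D"
    and edges: "\<And>y z. (y, z) \<in> E \<Longrightarrow> y \<in> D \<and> z = T y"
    and conn: "\<And>y. y \<in> D \<Longrightarrow> (x, y) \<in> (E \<union> E\<inverse>)\<^sup>*"
  shows "orbit T x = D"
proof -
  have self: "x \<in> orbit T x" using fin maps inj x by (rule self_in_orbit_if_inj_on)
  have orbit_D: "orbit T x \<subseteq> D" using maps x by (rule orbit_subset_if_maps)
  have "D \<subseteq> orbit T x"
  proof
    fix w assume "w \<in> D"
    with conn have "(x, w) \<in> (E \<union> E\<inverse>)\<^sup>*" by blast
    then show "w \<in> orbit T x"
    proof (induction rule: rtrancl_induct)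
      case base
      show ?case by (rule self)
    next
      case (step y z)
      show ?case
      proof (cases "(y, z) \<in> E")
        case True
        then show ?thesis using edges step.IH by (auto intro: orbit.step)
      next
        case False
        with step.hyps(2) have "(z, y) \<in> E" by blast
        with edges have z: "z \<in> D" and y: "y = T z" by auto
        from step.IH obtain j where j: "0 < j" "y = (T ^^ j) x" by (auto simp: orbit_altdef)
        have pred_in: "(T ^^ (j - 1)) x \<in> orbit T x" by (rule funpow_in_orbit[OF self])
        have "T ((T ^^ (j - 1)) x) = T z"
          using j y by (metis Suc_pred' comp_apply funpow.simps(2))
        then have "z = (T ^^ (j - 1)) x"
          using inj z pred_in orbit_D by (auto dest: inj_onD)
        then show ?thesis using pred_in by simp
      qed
    qed
  qed
  with orbit_D show ?thesis by blast
qed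

lemma
  assumes "x \<in> orbit T x"
  shows bij_betw_funpow_orbit: "bij_betw (\<lambda>j. (T ^^ j) x) {..<card (orbit T x)} (orbit T x)"
    and funpow_card_orbit: "(T ^^ card (orbit T x)) x = x"
proof -
  let ?d = "funpow_dist1 T x x"
  have enum: "bij_betw (\<lambda>j. (T ^^ j) x) {..<?d} (orbit T x)"
    using inj_on_funpow_dist1[OF assms] orbit_conv_funpow_dist1[OF assms]
    by (simp add: bij_betw_def atLeast0LessThan)
  then have "card (orbit T x) = ?d" by (simp add: bij_betw_same_card[symmetric])
  then show "bij_betw (\<lambda>j. (T ^^ j) x) {..<card (orbit T x)} (orbit T x)"
    and "(T ^^ card (orbit T x)) x = x"
    using enum funpow_dist1_prop[OF assms] by simp_all
qed

lemma cohomologous_if_prod_eq: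
  fixes G G' :: "'a \<Rightarrow> 'b :: field"
  assumes enum: "bij_betw (\<lambda>j. (T ^^ j) x) {..<n} D" and ret: "(T ^^ n) x = x"
    and G: "\<And>y. y \<in> D \<Longrightarrow> G y \<noteq> 0" and G': "\<And>y. y \<in> D \<Longrightarrow> G' y \<noteq> 0"
    and eq: "(\<Prod>y\<in>D. G y) = (\<Prod>y\<in>D. G' y)"
  obtains h where "\<And>y. y \<in> D \<Longrightarrow> h y \<noteq> 0"
    and "\<And>y. y \<in> D \<Longrightarrow> G' y * h y = h (T y) * G y"
proof -
  define f where "f j = (T ^^ j) x" for j
  define H where "H j = (\<Prod>t<j. G' (f t) / G (f t))" for j
  define h where "h y = H (the_inv_into {..<n} f y)" for y
  have enum_f: "bij_betw f {..<n} D" using enum by (simp add: f_def[abs_def])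
  have f_D: "f j \<in> D" if "j < n" for j using enum_f that by (auto simp: bij_betw_def)
  have H_nz: "H j \<noteq> 0" if "j \<le> n" for j
    using that f_D G G' by (auto simp: H_def prod_zero_iff)
  have H_Suc: "H (Suc j) = H j * (G' (f j) / G (f j))" for j by (simp add: H_def)
  have "H n = (\<Prod>t<n. G' (f t)) / (\<Prod>t<n. G (f t))" by (simp add: H_def prod_dividef)
  also have "\<dots> = (\<Prod>y\<in>D. G' y) / (\<Prod>y\<in>D. G y)"
    by (simp add: prod.reindex_bij_betw[OF enum_f])
  also have "\<dots> = 1"
    using eq G G' finite_lessThan[THEN bij_betw_finite[OF enum_f, THEN iffD1]]
    by (simp add: prod_zero_iff)
  finally have H_n: "H n = 1" .
  have h_f: "h (f j) = H j" if "j < n" for j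
    using that enum_f by (simp add: h_def bij_betw_def the_inv_into_f_f)
  show ?thesis
  proof (rule that)
    fix y assume "y \<in> D"
    then obtain j where j: "j < n" "y = f j" using enum_f by (auto simp: bij_betw_def)
    show "h y \<noteq> 0" using j h_f H_nz by simp
    have T_y: "T y = f (Suc j)" using j by (simp add: f_def)
    show "G' y * h y = h (T y) * G y"
    proof (cases "Suc j < n")
      case True
      then show ?thesis using j T_y h_f H_Suc G f_D by (simp add: field_simps)
    next
      case False
      then have "Suc j = n" using j by simp
      then have "h (T y) = 1" and "H j * (G' y / G y) = 1"
        using T_y ret j h_f[of 0] H_n H_Suc[of j] by (simp_all add: f_def H_def)
      then show ?thesis using j h_f G f_D by (simp add: field_simps)
    qed
  qed
qed

section \<open>Sign of a cyclic permutation\<close>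

lemma sign_cycle_of_list:
  assumes "distinct cs"
  shows "sign (cycle_of_list cs) = (-1) ^ (length cs - 1)"
  using assms
proof (induction cs rule: cycle_of_list.induct)
  case (1 i j cs)
  then have "i \<noteq> j" by auto
  have "sign (cycle_of_list (i # j # cs)) = sign (transpose i j) * sign (cycle_of_list (j # cs))"
    by (simp only: cycle_of_list.simps sign_compose[OF permutation_swap_id permutation_of_cycle])
  also have "\<dots> = (-1) ^ (length (i # j # cs) - 1)"
    using 1 \<open>i \<noteq> j\<close> by (simp add: sign_swap_id)
  finally show ?case .
qed simp_all

lemma sign_cyclic_permutation:
  assumes perm: "\<sigma> permutes S" and enum: "bij_betw (\<lambda>j. (\<sigma> ^^ j) x) {..<n} S"
    and ret: "(\<sigma> ^^ n) x = x"
  shows "sign \<sigma> = (-1) ^ (n - 1)"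
proof -
  define cs where "cs = map (\<lambda>j. (\<sigma> ^^ j) x) [0..<n]"
  have cs: "distinct cs" "set cs = S" "length cs = n"
    using enum by (auto simp: cs_def distinct_map bij_betw_def atLeast0LessThan)
  have "\<sigma> = cycle_of_list cs"
  proof
    fix y
    show "\<sigma> y = cycle_of_list cs y"
    proof (cases "y \<in> S")
      case True
      then obtain j where j: "j < n" "y = cs ! j" using cs by (metis in_set_conv_nth)
      have "map (cycle_of_list cs) cs = rotate1 cs"
        using cyclic_rotation[OF cs(1), of 1] by simp
      then have "cycle_of_list cs y = cs ! (Suc j mod n)"
        using j cs(3) by (metis nth_map nth_rotate1)
      also have "\<dots> = (\<sigma> ^^ Suc j) x"
      proof (cases "Suc j < n")
        case False
        then have "Suc j = n" using j by simp
        then show ?thesis using ret by (simp add: cs_def)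
      qed (simp add: cs_def)
      also have "\<dots> = \<sigma> y" using j by (simp add: cs_def)
      finally show ?thesis by simp
    next
      case False
      then show ?thesis using perm cs(2) by (simp add: permutes_not_in id_outside_supp)
    qed
  qed
  then show ?thesis using sign_cycle_of_list[OF cs(1)] cs(3) by simp
qed

section \<open>Determinants of r x r matrices\<close>

definition cmat_to_mat :: "nat \<Rightarrow> cmat \<Rightarrow> complex mat" where
  "cmat_to_mat r A = mat r r (\<lambda>(a, b). A a b)"

lemma cmat_to_mat_carrier [simp]: "cmat_to_mat r A \<in> carrier_mat r r"
  by (simp add: cmat_to_mat_def)

lemma cmat_to_mat_mmul: "cmat_to_mat r (mmul r A B) = cmat_to_mat r A * cmat_to_mat r B"
  by (rule eq_matI) (auto simp: cmat_to_mat_def mmul_def scalar_prod_def atLeast0LessThan)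

lemma det_cmat_to_mat_mmul:
  "det (cmat_to_mat r (mmul r A B)) = det (cmat_to_mat r A) * det (cmat_to_mat r B)"
  by (simp add: cmat_to_mat_mmul det_mult[OF cmat_to_mat_carrier cmat_to_mat_carrier])

lemma cmat_to_mat_mid: "cmat_to_mat r mid = 1\<^sub>m r"
  by (rule eq_matI) (auto simp: cmat_to_mat_def mid_def)

lemma det_cmat_to_mat_single_term:
  assumes \<sigma>: "\<sigma> permutes {..<r}"
    and vanish: "\<And>q. q permutes {..<r} \<Longrightarrow> q \<noteq> \<sigma> \<Longrightarrow> \<exists>a<r. A a (q a) = 0"
  shows "det (cmat_to_mat r A) = signof \<sigma> * (\<Prod>a<r. A a (\<sigma> a))"
proof -
  let ?t = "\<lambda>q. signof q * (\<Prod>a<r. A a (q a)) :: complex"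
  have fin: "finite {q. q permutes {..<r}}" by (simp add: finite_permutations)
  have "det (cmat_to_mat r A) = (\<Sum>q | q permutes {..<r}. ?t q)"
    by (subst det_def'[OF cmat_to_mat_carrier]) (simp add: cmat_to_mat_def atLeast0LessThan)
  also have "\<dots> = ?t \<sigma> + (\<Sum>q \<in> {q. q permutes {..<r}} - {\<sigma>}. ?t q)"
    using sum.remove[OF fin, of \<sigma> ?t] \<sigma> by simp
  also have "(\<Sum>q \<in> {q. q permutes {..<r}} - {\<sigma>}. ?t q) = 0"
    using vanish by (intro sum.neutral) (fastforce simp: prod_zero_iff)
  finally show ?thesis by simp
qed

lemma det_monomial_cmat:
  assumes \<sigma>: "\<sigma> permutes {..<r}"
    and A: "\<And>a b. a < r \<Longrightarrow> b < r \<Longrightarrow> A a b = (if b = \<sigma> a then c a else 0)"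
  shows "det (cmat_to_mat r A) = signof \<sigma> * (\<Prod>a<r. c a)"
proof -
  have "\<exists>a<r. A a (q a) = 0" if q: "q permutes {..<r}" "q \<noteq> \<sigma>" for q
  proof -
    obtain a where a: "q a \<noteq> \<sigma> a" using q(2) by auto
    then have "a < r" using permutes_not_in[OF q(1)] permutes_not_in[OF \<sigma>] by fastforce
    then show ?thesis using a A permutes_in_image[OF q(1)] by auto
  qed
  then have "det (cmat_to_mat r A) = signof \<sigma> * (\<Prod>a<r. A a (\<sigma> a))"
    by (rule det_cmat_to_mat_single_term[OF \<sigma>])
  also have "(\<Prod>a<r. A a (\<sigma> a)) = (\<Prod>a<r. c a)"
    using A permutes_in_image[OF \<sigma>] by (intro prod.cong) auto
  finally show ?thesis .
qed

definition strictly_lower_wrt :: "nat \<Rightarrow> (nat \<Rightarrow> int) \<Rightarrow> cmat \<Rightarrow> bool" where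
  "strictly_lower_wrt r key A \<longleftrightarrow> (\<forall>a<r. \<forall>b<r. A a b \<noteq> 0 \<longrightarrow> key b < key a)"

definition unitriangular_wrt :: "nat \<Rightarrow> (nat \<Rightarrow> int) \<Rightarrow> cmat \<Rightarrow> bool" where
  "unitriangular_wrt r key A \<longleftrightarrow>
     (\<forall>a<r. A a a = 1) \<and> (\<forall>a<r. \<forall>b<r. a \<noteq> b \<longrightarrow> A a b \<noteq> 0 \<longrightarrow> key b < key a)"

lemma det_unitriangular_wrt:
  assumes inj: "inj_on key {..<r}" and A: "unitriangular_wrt r key A"
  shows "det (cmat_to_mat r A) = 1"
proof -
  have "\<exists>a<r. A a (q a) = 0" if q: "q permutes {..<r}" "q \<noteq> id" for q
  proof (rule ccontr)
    assume "\<not> (\<exists>a<r. A a (q a) = 0)"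
    then have "key (q a) \<le> key a" if "a < r" for a
    proof (cases "q a = a")
      case False
      moreover have "q a < r" using permutes_in_image[OF q(1)] that by simp
      ultimately show ?thesis
        using A that \<open>\<not> (\<exists>a<r. A a (q a) = 0)\<close> by (force simp: unitriangular_wrt_def)
    qed simp
    moreover have "(\<Sum>a<r. key a - key (q a)) = 0"
      using sum.permute[OF q(1), of key] by (simp add: sum_subtractf)
    ultimately have "key (q a) = key a" if "a < r" for a
      using that sum_nonneg_eq_0_iff[of "{..<r}" "\<lambda>a. key a - key (q a)"] by fastforce
    then have "q a = a" for a
      using inj permutes_in_image[OF q(1)] permutes_not_in[OF q(1)]
      by (cases "a < r") (auto dest: inj_onD)
    then show False using q(2) by auto
  qed
  then have "det (cmat_to_mat r A) = signof id * (\<Prod>a<r. A a (id a))"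
    by (rule det_cmat_to_mat_single_term[OF permutes_id])
  then show ?thesis using A by (simp add: unitriangular_wrt_def)
qed

lemma mpow_nonzero_wrt:
  assumes N: "strictly_lower_wrt r key N" and a: "a < r"
  shows "b < r \<Longrightarrow> mpow r N j a b \<noteq> 0 \<Longrightarrow> (j = 0 \<and> a = b) \<or> key b < key a"
proof (induction j arbitrary: b)
  case 0
  then show ?case by (simp add: mid_def split: if_splits)
next
  case (Suc j)
  then have "(\<Sum>c<r. mpow r N j a c * N c b) \<noteq> 0" by (simp add: mmul_def)
  then obtain c where c: "c < r" "mpow r N j a c \<noteq> 0" "N c b \<noteq> 0"
    by (metis (no_types, lifting) lessThan_iff mult_zero_left mult_zero_right sum.neutral)
  then have "key b < key c" using N Suc.prems(1) by (auto simp: strictly_lower_wrt_def)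
  moreover have "(j = 0 \<and> a = c) \<or> key c < key a" using Suc.IH c by simp
  ultimately show ?case by auto
qed

lemma unitriangular_mexp:
  assumes N: "strictly_lower_wrt r key N"
  shows "unitriangular_wrt r key (mexp r N)"
  unfolding unitriangular_wrt_def
proof (intro conjI allI impI)
  fix a assume a: "a < r"
  have "(\<lambda>j. mpow r N j a a / of_nat (fact j)) = (\<lambda>j. if j = 0 then 1 else 0)"
    using mpow_nonzero_wrt[OF N a a] by (auto simp: fun_eq_iff mid_def)
  then show "mexp r N a a = 1"
    using sums_single[of 0 "\<lambda>_. 1 :: complex"] by (simp add: mexp_def sums_iff)
next
  fix a b assume ab: "a < r" "b < r" "a \<noteq> b" "mexp r N a b \<noteq> 0"
  show "key b < key a"
  proof (rule ccontr)
    assume "\<not> key b < key a"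
    then have "mpow r N j a b = 0" for j using mpow_nonzero_wrt[OF N ab(1,2)] ab(3) by blast
    then show False using ab(4) by (simp add: mexp_def)
  qed
qed

lemma det_walk_prod_map_upt:
  "det (cmat_to_mat r (walk_prod r G (map f [0..<Suc l])))
     = (\<Prod>i<l. det (cmat_to_mat r (G (f i) (f (Suc i)))))"
proof (induction l arbitrary: f)
  case 0
  then show ?case by (simp add: cmat_to_mat_mid)
next
  case (Suc l)
  have "walk_prod r G (map f [0..<Suc (Suc l)])
          = mmul r (G (f 0) (f 1)) (walk_prod r G (map (\<lambda>i. f (Suc i)) [0..<Suc l]))"
    by (simp only: map_upt_Suc walk_prod.simps One_nat_def)
  then show ?case
    using Suc.IH[of "\<lambda>i. f (Suc i)"]
    by (simp del: upt_Suc prod.lessThan_Suc add: det_cmat_to_mat_mmul prod.lessThan_Suc_shift)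
qed

lemma det_G_mat_at_one:
  assumes i: "i < k" and sep: "separable k v r m" and \<sigma>: "\<sigma> permutes {..<r}"
    and \<sigma>_eq: "\<And>a. a < r \<Longrightarrow> \<sigma> a = p i a"
  shows "det (cmat_to_mat r (G_mat k v r p m g n (1, 1) i (Suc i mod k)))
           = signof \<sigma> * (\<Prod>a<r. g i a)"
proof -
  define key where "key a = pair_ip (m i a) (v (Suc i mod k))" for a
  have pair_ip_mdiff: "pair_ip (mdiff x y) w = pair_ip x w - pair_ip y w" for x y w
    by (simp add: pair_ip_def mdiff_def algebra_simps)
  have key_ne: "key a \<noteq> key b" if "a < r" "b < r" "a \<noteq> b" for a b
    using sep i that by (auto simp: separable_def key_def)
  then have "inj_on key {..<r}" by (auto intro: inj_onI)
  moreover have "strictly_lower_wrt r key (N_mat k v m n (1, 1) i (Suc i mod k))"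
    using key_ne
    by (fastforce simp: strictly_lower_wrt_def N_mat_def tau_def pair_ip_mdiff key_def
        split: if_splits)
  ultimately have "det (cmat_to_mat r (mexp r (N_mat k v m n (1, 1) i (Suc i mod k)))) = 1"
    by (intro det_unitriangular_wrt unitriangular_mexp)
  moreover have "det (cmat_to_mat r (Gsf_mat k p m g (1, 1) i (Suc i mod k)))
                   = signof \<sigma> * (\<Prod>a<r. g i a)"
    by (rule det_monomial_cmat[OF \<sigma>]) (simp add: Gsf_mat_def gsf_def zmon_def \<sigma>_eq)
  ultimately show ?thesis by (simp add: G_mat_def det_cmat_to_mat_mmul)
qed

lemma cycle_around_origin: "0 < k \<Longrightarrow> cycle_around k ZeroC (map (\<lambda>i. i mod k) [0..<Suc k])"
  unfolding cycle_around_def adjacent_def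
  by (auto simp: nth_append hd_map last_map nth_map upt_Suc_append[symmetric] simp del: upt_Suc)

section \<open>The adjacency cycle of the maximal lifts\<close>

lemma holonomy_eq_prod:
  "holonomy k p g l x = (\<Prod>j<l. g (fst ((lstep k p ^^ j) x)) (snd ((lstep k p ^^ j) x)))"
  by (induction l arbitrary: x)
     (simp_all add: prod.lessThan_Suc_shift funpow_Suc_right del: funpow.simps prod.lessThan_Suc)

locale connected_link =
  fixes k r :: nat and p :: "nat \<Rightarrow> nat \<Rightarrow> nat"
  assumes k_pos: "0 < k" and r_pos: "0 < r"
    and sheet_bij: "\<And>i. i < k \<Longrightarrow> bij_betw (p i) {..<r} {..<r}"
    and connected: "link_connected k r p"
begin

abbreviation lifts :: "(nat \<times> nat) set" where
  "lifts \<equiv> {..<k} \<times> {..<r}"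

lemma lstep_maps_lifts: "lstep k p ` lifts \<subseteq> lifts"
proof -
  have "p i a < r" if "i < k" "a < r" for i a
    using bij_betwE[OF sheet_bij[OF that(1)]] that(2) by simp
  then show ?thesis using k_pos by (auto simp: lstep_def)
qed

lemma inj_on_lstep: "inj_on (lstep k p) lifts"
proof (rule inj_onI)
  fix x y assume x: "x \<in> lifts" and y: "y \<in> lifts" and eq: "lstep k p x = lstep k p y"
  then have "Suc (fst x) mod k = Suc (fst y) mod k" by (simp add: lstep_def)
  then have fst_eq: "fst x = fst y" using x y by (auto simp: mod_Suc split: if_splits)
  then have "p (fst x) (snd x) = p (fst x) (snd y)" using eq by (simp add: lstep_def)
  then have "snd x = snd y" using sheet_bij[of "fst x"] x y by (auto simp: bij_betw_def inj_on_def)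
  then show "x = y" using fst_eq by (simp add: prod_eq_iff)
qed

lemma orbit_lstep_eq_lifts: "orbit (lstep k p) (0, 0) = lifts"
  using connected k_pos r_pos
  by (intro orbit_eq_if_connected[where E = "link_edges k r p"] lstep_maps_lifts inj_on_lstep)
     (auto simp: link_edges_def link_connected_def)

lemma
  shows lifts_enumeration: "bij_betw (\<lambda>j. (lstep k p ^^ j) (0, 0)) {..<k * r} lifts"
    and lstep_full_cycle: "(lstep k p ^^ (k * r)) (0, 0) = (0, 0)"
proof -
  have self: "(0, 0) \<in> orbit (lstep k p) (0, 0)" using orbit_lstep_eq_lifts k_pos r_pos by simp
  show "bij_betw (\<lambda>j. (lstep k p ^^ j) (0, 0)) {..<k * r} lifts"
    and "(lstep k p ^^ (k * r)) (0, 0) = (0, 0)"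
    using bij_betw_funpow_orbit[OF self] funpow_card_orbit[OF self]
    by (simp_all add: orbit_lstep_eq_lifts card_cartesian_product)
qed

lemma monodromy_eq_prod: "monodromy k r p g = (\<Prod>i<k. \<Prod>a<r. g i a)"
proof -
  have "monodromy k r p g = (\<Prod>y\<in>lifts. g (fst y) (snd y))"
    using prod.reindex_bij_betw[OF lifts_enumeration, of "\<lambda>y. g (fst y) (snd y)"]
    by (simp add: monodromy_def holonomy_eq_prod)
  then show ?thesis by (simp add: prod.cartesian_product case_prod_beta)
qed

lemma ls_iso_if_monodromy_eq:
  assumes g: "loc_sys k r g" and g': "loc_sys k r g'"
    and eq: "monodromy k r p g = monodromy k r p g'"
  shows "ls_iso k r p g g'"
proof -
  have "(\<Prod>y\<in>lifts. g (fst y) (snd y)) = (\<Prod>y\<in>lifts. g' (fst y) (snd y))"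
    using eq by (simp add: monodromy_eq_prod prod.cartesian_product case_prod_beta)
  then obtain h where "\<And>y. y \<in> lifts \<Longrightarrow> h y \<noteq> 0"
    and "\<And>y. y \<in> lifts \<Longrightarrow> g' (fst y) (snd y) * h y = h (lstep k p y) * g (fst y) (snd y)"
    by (rule cohomologous_if_prod_eq[OF lifts_enumeration lstep_full_cycle, rotated 2])
       (use g g' in \<open>auto simp: loc_sys_def\<close>)
  then show ?thesis
    unfolding ls_iso_def by (intro exI[of _ "\<lambda>i a. h (i, a)"]) (auto simp: lstep_def)
qed

definition sheet_perm :: "nat \<Rightarrow> nat \<Rightarrow> nat" where
  "sheet_perm i a = (if a < r then p i a else a)"

lemma sheet_perm_permutes: "i < k \<Longrightarrow> sheet_perm i permutes {..<r}"
  by (rule bij_imp_permutes)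
     (auto simp: sheet_perm_def intro: bij_betw_cong[THEN iffD1, OF _ sheet_bij])

primrec transport :: "nat \<Rightarrow> nat \<Rightarrow> nat" where
  "transport 0 = id"
| "transport (Suc l) = sheet_perm l \<circ> transport l"

lemma transport_permutes: "l \<le> k \<Longrightarrow> transport l permutes {..<r}"
proof (induction l)
  case (Suc l)
  then have "transport l permutes {..<r}" and "sheet_perm l permutes {..<r}"
    by (simp_all add: sheet_perm_permutes)
  then show ?case unfolding transport.simps by (rule permutes_compose)
qed (simp add: permutes_id)

lemma sign_transport: "l \<le> k \<Longrightarrow> sign (transport l) = (\<Prod>i<l. sign (sheet_perm i))"
proof (induction l)
  case (Suc l)
  have "permutation (sheet_perm l)" and "permutation (transport l)"
    using Suc.prems sheet_perm_permutes[of l] transport_permutes[of l]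
    by (simp_all add: permutes_imp_permutation[OF finite_lessThan])
  then have "sign (transport (Suc l)) = sign (sheet_perm l) * sign (transport l)"
    unfolding transport.simps by (rule sign_compose)
  then show ?case using Suc by (simp add: mult.commute del: transport.simps)
qed simp

lemma funpow_lstep_transport:
  "l \<le> k \<Longrightarrow> a < r \<Longrightarrow> (lstep k p ^^ l) (0, a) = (l mod k, transport l a)"
proof (induction l)
  case (Suc l)
  then have "transport l a < r" using permutes_in_image[OF transport_permutes[of l]] by simp
  then show ?case using Suc by (simp add: lstep_def sheet_perm_def mod_Suc)
qed simp

lemma funpow_lstep_full_turns: "(lstep k p ^^ (k * j)) (0, 0) = (0, (transport k ^^ j) 0)"
proof (induction j)
  case (Suc j)
  have "(transport k ^^ j) 0 < r"
    using r_pos permutes_in_image[OF permutes_funpow[OF transport_permutes[of k]]] by simp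
  then show ?case using Suc funpow_lstep_transport[of k] by (simp add: funpow_add mult_Suc_right)
qed simp

lemma prod_sign_sheet_perm: "(\<Prod>i<k. sign (sheet_perm i)) = (-1) ^ (r - 1)"
proof -
  let ?e = "\<lambda>j. (transport k ^^ j) 0"
  have "inj_on ?e {..<r}"
  proof (rule inj_onI)
    fix a b assume ab: "a \<in> {..<r}" "b \<in> {..<r}" "?e a = ?e b"
    then have "(lstep k p ^^ (k * a)) (0, 0) = (lstep k p ^^ (k * b)) (0, 0)"
      by (simp add: funpow_lstep_full_turns)
    moreover have "k * a \<in> {..<k * r}" "k * b \<in> {..<k * r}" using ab k_pos by auto
    ultimately show "a = b"
      using lifts_enumeration k_pos by (auto simp: bij_betw_def dest: inj_onD)
  qed
  moreover have "?e ` {..<r} \<subseteq> {..<r}"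
    using r_pos permutes_in_image[OF permutes_funpow[OF transport_permutes[of k]]] by auto
  ultimately have "bij_betw ?e {..<r} {..<r}"
    by (simp add: bij_betw_def card_subset_eq card_image)
  moreover have "?e r = 0"
    using lstep_full_cycle funpow_lstep_full_turns[of r] by simp
  ultimately have "sign (transport k) = (-1) ^ (r - 1)"
    using transport_permutes[of k] by (intro sign_cyclic_permutation) auto
  then show ?thesis using sign_transport[of k] by simp
qed

lemma det_transitions_around_origin:
  assumes sep: "separable k v r m"
  shows "det (cmat_to_mat r
           (walk_prod r (G_mat k v r p m g n (1, 1)) (map (\<lambda>i. i mod k) [0..<Suc k])))
         = (-1) ^ (r - 1) * monodromy k r p g"
proof -
  have "det (cmat_to_mat r
          (walk_prod r (G_mat k v r p m g n (1, 1)) (map (\<lambda>i. i mod k) [0..<Suc k])))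
        = (\<Prod>i<k. det (cmat_to_mat r (G_mat k v r p m g n (1, 1) i (Suc i mod k))))"
    unfolding det_walk_prod_map_upt by (rule prod.cong) auto
  also have "\<dots> = (\<Prod>i<k. of_int (sign (sheet_perm i)) * (\<Prod>a<r. g i a))"
    using sep sheet_perm_permutes
    by (intro prod.cong refl det_G_mat_at_one) (auto simp: sheet_perm_def)
  also have "\<dots> = of_int (\<Prod>i<k. sign (sheet_perm i)) * (\<Prod>i<k. \<Prod>a<r. g i a)"
    by (simp add: prod.distrib)
  finally show ?thesis by (simp add: prod_sign_sheet_perm monodromy_eq_prod)
qed

end

theorem lemma5p3:
  fixes k r :: nat
    and v :: "nat \<Rightarrow> int \<times> int"
    and p :: "nat \<Rightarrow> nat \<Rightarrow> nat"
    and m :: "nat \<Rightarrow> nat \<Rightarrow> int \<times> int"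
    and g :: "nat \<Rightarrow> nat \<Rightarrow> complex"
    and n :: "nat \<Rightarrow> nat \<Rightarrow> nat \<Rightarrow> nat \<Rightarrow> complex"
  assumes fan: "complete_fan2 k v"
    and L: "trop_multisection k v r p m"
    and sep: "separable k v r m"
    and conn: "link_connected k r p"
    and ls: "loc_sys k r g"
    and cons: "Theta_consistent k v r p m g n"
  shows "monodromy k r p g = (-1) ^ (r + 1)
       \<and> (\<forall>g'. loc_sys k r g' \<and> monodromy k r p g' = (-1) ^ (r + 1) \<longrightarrow> ls_iso k r p g g')"
proof -
  interpret connected_link k r p
    using fan L conn by unfold_locales (auto simp: complete_fan2_def trop_multisection_def)
  let ?cycle = "map (\<lambda>i. i mod k) [0..<Suc k]"
  let ?G = "G_mat k v r p m g n (1, 1)"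
  have "\<forall>\<alpha><r. \<forall>\<beta><r. walk_prod r ?G ?cycle \<alpha> \<beta> = mid \<alpha> \<beta>"
    using cons cycle_around_origin[OF k_pos] by (simp add: Theta_consistent_def fan_cones_def)
  then have "cmat_to_mat r (walk_prod r ?G ?cycle) = 1\<^sub>m r"
    by (intro eq_matI) (auto simp: cmat_to_mat_def mid_def)
  then have "det (cmat_to_mat r (walk_prod r ?G ?cycle)) = 1" by simp
  then have "(-1) ^ (r - 1) * monodromy k r p g = 1"
    by (simp only: det_transitions_around_origin[OF sep])
  then have mono: "monodromy k r p g = (-1) ^ (r + 1)"
    using r_pos by (cases r) (auto simp: minus_one_power_iff minus_equation_iff split: if_splits)
  show ?thesis using mono ls ls_iso_if_monodromy_eq by auto
qed

end
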